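(* Let $\epsilon\in(0,1)$, let $m\le k\le n$ be positive integers with $k\ge\frac{m-1}{2\epsilon}$, and let $\mathbf a_1,\dots,\mathbf a_n\in\mathbb R^m$. Let $w^*=\max\{[\det(\sum_{i\in S}\mathbf a_i\mathbf a_i^\top)]^{1/m}: S\subseteq[n],|S|=k\}$, let $(\hat{\mathbf x},\hat w)$ be an optimal solution of the convex relaxation $$\max_{\mathbf x,w}\Big\{w:\ w\le \Big[\det\Big(\sum_{i\in[n]}x_i\mathbf a_i\mathbf a_i^\top\Big)\Big]^{1/m},\ \sum_{i\in[n]}x_i=k,\ \mathbf x\in[0,1]^n\Big\},$$ and let $\mathcal S$ be the random size-$k$ subset of $[n]$ with $\Pr[\mathcal S=S]=\prod_{j\in S}\hat x_j\big/\sum_{\bar S\subseteq[n],|\bar S|=k}\prod_{i\in\bar S}\hat x_i$ for every $S\subseteq[n]$ with $|S|=k$. Then $$\Big\{\mathbb E\Big[\det\Big(\sum_{i\in\mathcal S}\mathbf a_i\mathbf a_i^\top\Big)\Big]\Big\}^{1/m}\ge (0.5-\epsilon)\,w^*.$$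
   Context: $[n]=\{1,\dots,n\}$. *)

theory Defs
  imports "HOL-Analysis.Analysis"
begin

definition outer :: "real ^ 'm \<Rightarrow> real ^ 'm ^ 'm" where
  "outer v = (\<chi> r c. v $ r * v $ c)"

definition wdet :: "(nat \<Rightarrow> real) \<Rightarrow> (nat \<Rightarrow> real ^ 'm) \<Rightarrow> nat set \<Rightarrow> real" where
  "wdet x a S = det (\<Sum>i\<in>S. x i *\<^sub>R outer (a i))"

definition relax_feasible :: "nat \<Rightarrow> nat \<Rightarrow> (nat \<Rightarrow> real ^ 'm) \<Rightarrow> (nat \<Rightarrow> real) \<Rightarrow> real \<Rightarrow> bool" where
  "relax_feasible n k a x w \<longleftrightarrow>
     w \<le> wdet x a {1..n} powr (1 / real CARD('m)) \<and>
     (\<Sum>i\<in>{1..n}. x i) = real k \<and> (\<forall>i\<in>{1..n}. 0 \<le> x i \<and> x i \<le> 1)"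

definition relax_optimal :: "nat \<Rightarrow> nat \<Rightarrow> (nat \<Rightarrow> real ^ 'm) \<Rightarrow> (nat \<Rightarrow> real) \<Rightarrow> real \<Rightarrow> bool" where
  "relax_optimal n k a x w \<longleftrightarrow> relax_feasible n k a x w \<and>
     (\<forall>x' w'. relax_feasible n k a x' w' \<longrightarrow> w' \<le> w)"

definition ksubsets :: "nat \<Rightarrow> nat \<Rightarrow> nat set set" where
  "ksubsets n k = {S. S \<subseteq> {1..n} \<and> card S = k}"

definition sample_prob :: "nat \<Rightarrow> nat \<Rightarrow> (nat \<Rightarrow> real) \<Rightarrow> nat set \<Rightarrow> real" where
  "sample_prob n k x S = (\<Prod>j\<in>S. x j) / (\<Sum>T\<in>ksubsets n k. \<Prod>i\<in>T. x i)"

end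

theory Submission
  imports Defs
begin

text \<open>
  By the Cauchy--Binet formula, \<open>det (\<Sum>i\<in>S. x\<^sub>i a\<^sub>i a\<^sub>i\<^sup>T)\<close> is the sum over the
  \<open>m\<close>-subsets \<open>T \<subseteq> S\<close> of \<open>(\<Prod>i\<in>T. x\<^sub>i) \<cdot> D\<^sub>T\<close>, where the Gram determinants
  \<open>D\<^sub>T = det (\<Sum>i\<in>T. a\<^sub>i a\<^sub>i\<^sup>T)\<close> are nonnegative. Summing over the \<open>k\<close>-sets \<open>S\<close> with
  weights \<open>\<Prod>i\<in>S. x\<^sub>i\<close>, the expected determinant of the sample becomes
  \<open>\<Sum>\<^sub>T (\<Prod>i\<in>T. x\<^sub>i) D\<^sub>T e\<^bsub>k-m\<^esub>([n] - T) / e\<^sub>k([n])\<close>, with \<open>e\<^sub>r\<close> the elementary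
  symmetric polynomials in \<open>x\<close>. As \<open>0 \<le> x \<le> 1\<close> and \<open>\<Sum>x = k\<close>, adding an index \<open>t\<close>
  to \<open>R\<close> gives \<open>e\<^bsub>r+1\<^esub>(R + t) \<le> (1 + k/(r+1)) e\<^sub>r(R)\<close>; adding the \<open>m\<close> indices of
  \<open>T\<close> one at a time shows that each ratio is at least \<open>(1 + k/(k-m+1))\<^bsup>-m\<^esup> \<ge> (1/2 - \<epsilon>)\<^sup>m\<close>
  by the choice of \<open>k\<close>. Hence the expectation is at least
  \<open>(1/2 - \<epsilon>)\<^sup>m\<close> times the relaxed determinant, which dominates \<open>(w\<^sup>*)\<^sup>m\<close> because
  indicator vectors of \<open>k\<close>-sets are feasible for the relaxation.
\<close>

lemma det_linear_rows_sum_PiE: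
  fixes a :: "'n::finite \<Rightarrow> 'b \<Rightarrow> 'a::comm_ring_1 ^ 'n"
  assumes "finite S"
  shows "det (\<chi> i. \<Sum>j\<in>S. a i j) = (\<Sum>f\<in>UNIV \<rightarrow>\<^sub>E S. det (\<chi> i. a i (f i)))"
proof -
  have "det (\<chi> i. \<Sum>j\<in>S. a i j) =
      (\<Sum>p | p permutes UNIV. \<Sum>f\<in>UNIV \<rightarrow>\<^sub>E S. of_int (sign p) * (\<Prod>i\<in>UNIV. a i (f i) $ p i))"
    by (simp add: det_def sum_component prod_sum_PiE assms sum_distrib_left)
  also have "\<dots> = (\<Sum>f\<in>UNIV \<rightarrow>\<^sub>E S. \<Sum>p | p permutes UNIV. of_int (sign p) * (\<Prod>i\<in>UNIV. a i (f i) $ p i))"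
    by (rule sum.swap)
  finally show ?thesis
    by (simp add: det_def)
qed

lemma wdet_eq_sum_injective:
  fixes a :: "nat \<Rightarrow> real ^ 'm::finite"
  assumes "finite S"
  shows "wdet y a S =
    (\<Sum>f | inj f \<and> range f \<subseteq> S. (\<Prod>r\<in>UNIV. y (f r) * a (f r) $ r) * det (\<chi> r. a (f r)))"
proof -
  have "(\<Sum>i\<in>S. y i *\<^sub>R outer (a i)) = (\<chi> r. \<Sum>i\<in>S. (y i * a i $ r) *s a i)"
    by (simp add: vec_eq_iff outer_def mult.assoc)
  then have "wdet y a S =
      (\<Sum>f\<in>UNIV \<rightarrow>\<^sub>E S. (\<Prod>r\<in>UNIV. y (f r) * a (f r) $ r) * det (\<chi> r. a (f r)))"
    by (simp add: wdet_def det_linear_rows_sum_PiE[OF assms] det_rows_mul)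
  also have "\<dots> = (\<Sum>f | inj f \<and> range f \<subseteq> S. (\<Prod>r\<in>UNIV. y (f r) * a (f r) $ r) * det (\<chi> r. a (f r)))"
  proof (rule sum.mono_neutral_right)
    show "finite ((UNIV :: 'm set) \<rightarrow>\<^sub>E S)"
      using assms by (intro finite_PiE) auto
    show "{f. inj f \<and> range f \<subseteq> S} \<subseteq> UNIV \<rightarrow>\<^sub>E S"
      by auto
    show "\<forall>f\<in>(UNIV \<rightarrow>\<^sub>E S) - {f. inj f \<and> range f \<subseteq> S}.
        (\<Prod>r\<in>UNIV. y (f r) * a (f r) $ r) * det (\<chi> r. a (f r)) = 0"
    proof
      fix f :: "'m \<Rightarrow> nat"
      assume "f \<in> (UNIV \<rightarrow>\<^sub>E S) - {f. inj f \<and> range f \<subseteq> S}"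
      then obtain i j where "i \<noteq> j" "f i = f j"
        by (auto simp: inj_def)
      then have "det (\<chi> r. a (f r)) = 0"
        by (intro det_identical_rows[of i j]) (simp_all add: row_def vec_eq_iff)
      then show "(\<Prod>r\<in>UNIV. y (f r) * a (f r) $ r) * det (\<chi> r. a (f r)) = 0"
        by simp
    qed
  qed
  finally show ?thesis .
qed

lemma wdet_Cauchy_Binet:
  fixes a :: "nat \<Rightarrow> real ^ 'm::finite"
  assumes "finite S"
  shows "wdet y a S = (\<Sum>T | T \<subseteq> S \<and> card T = CARD('m). (\<Prod>t\<in>T. y t) * wdet (\<lambda>_. 1) a T)"
proof -
  let ?term = "\<lambda>f. (\<Prod>r\<in>UNIV. y (f r) * a (f r) $ r) * det (\<chi> r. a (f r))"
  let ?inj = "\<lambda>X. {f :: 'm \<Rightarrow> nat. inj f \<and> range f \<subseteq> X}"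
  have fin_inj: "finite (?inj X)" if "finite X" for X
    by (rule finite_subset[of _ "UNIV \<rightarrow>\<^sub>E X"]) (auto intro: finite_PiE simp: that)
  have block: "(\<Sum>f | f \<in> ?inj S \<and> range f = T. ?term f) = (\<Prod>t\<in>T. y t) * wdet (\<lambda>_. 1) a T"
    if T: "T \<subseteq> S" "card T = CARD('m)" for T
  proof -
    have "finite T"
      using T assms by (auto intro: finite_subset)
    have onto: "range f = T" if "inj f" "range f \<subseteq> T" for f :: "'m \<Rightarrow> nat"
      using that T \<open>finite T\<close> by (metis card_image card_subset_eq)
    have factor: "?term f = (\<Prod>t\<in>T. y t) * ((\<Prod>r\<in>UNIV. a (f r) $ r) * det (\<chi> r. a (f r)))"
      if "f \<in> ?inj T" for f
    proof -
      have "range f = T"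
        using that onto by blast
      then show ?thesis
        using that prod.reindex[of f UNIV y] by (simp add: prod.distrib)
    qed
    have "{f. f \<in> ?inj S \<and> range f = T} = ?inj T"
      using T onto by auto
    then have "(\<Sum>f | f \<in> ?inj S \<and> range f = T. ?term f) = (\<Sum>f\<in>?inj T. ?term f)"
      by simp
    also have "\<dots> = (\<Sum>f\<in>?inj T. (\<Prod>t\<in>T. y t) * ((\<Prod>r\<in>UNIV. a (f r) $ r) * det (\<chi> r. a (f r))))"
      by (rule sum.cong[OF refl]) (rule factor)
    also have "\<dots> = (\<Prod>t\<in>T. y t) * wdet (\<lambda>_. 1) a T"
      by (simp add: wdet_eq_sum_injective[OF \<open>finite T\<close>] sum_distrib_left)
    finally show ?thesis .
  qed
  have "wdet y a S = (\<Sum>T | T \<subseteq> S \<and> card T = CARD('m). \<Sum>f | f \<in> ?inj S \<and> range f = T. ?term f)"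
    unfolding wdet_eq_sum_injective[OF assms]
    by (rule sum.group[symmetric]) (auto simp: fin_inj assms card_image)
  also have "\<dots> = (\<Sum>T | T \<subseteq> S \<and> card T = CARD('m). (\<Prod>t\<in>T. y t) * wdet (\<lambda>_. 1) a T)"
    by (rule sum.cong[OF refl]) (use block in auto)
  finally show ?thesis .
qed

definition esym :: "('a \<Rightarrow> real) \<Rightarrow> 'a set \<Rightarrow> nat \<Rightarrow> real" where
  "esym x R r = (\<Sum>U | U \<subseteq> R \<and> card U = r. \<Prod>i\<in>U. x i)"

lemma esym_0 [simp]: "finite R \<Longrightarrow> esym x R 0 = 1"
proof -
  assume "finite R"
  then have "{U. U \<subseteq> R \<and> card U = 0} = {{}}"
    by (auto dest: finite_subset)
  then show ?thesis
    by (simp add: esym_def)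
qed

lemma esym_empty_Suc [simp]: "esym x {} (Suc r) = 0"
  by (simp add: esym_def)

lemma esym_nonneg: "(\<And>i. i \<in> R \<Longrightarrow> 0 \<le> x i) \<Longrightarrow> 0 \<le> esym x R r"
  unfolding esym_def by (intro sum_nonneg prod_nonneg) auto

lemma esym_insert_Suc:
  assumes "finite R" "t \<notin> R"
  shows "esym x (insert t R) (Suc r) = esym x R (Suc r) + x t * esym x R r"
proof -
  let ?A = "{U. U \<subseteq> R \<and> card U = Suc r}"
  let ?C = "{U. U \<subseteq> R \<and> card U = r}"
  have split: "{U. U \<subseteq> insert t R \<and> card U = Suc r} = ?A \<union> insert t ` ?C"
  proof (intro equalityI subsetI)
    fix U
    assume U: "U \<in> {U. U \<subseteq> insert t R \<and> card U = Suc r}"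
    then have "finite U"
      using assms(1) by (auto intro: finite_subset)
    with U have "U \<in> ?A" if "t \<notin> U"
      using that by auto
    moreover have "U = insert t (U - {t}) \<and> U - {t} \<in> ?C" if "t \<in> U"
      using U \<open>finite U\<close> that by auto
    ultimately show "U \<in> ?A \<union> insert t ` ?C"
      by blast
  next
    fix U
    assume "U \<in> ?A \<union> insert t ` ?C"
    then show "U \<in> {U. U \<subseteq> insert t R \<and> card U = Suc r}"
      using assms by (auto simp: card_insert_if finite_subset[of _ R])
  qed
  have inj: "inj_on (insert t) ?C"
    using assms(2) by (intro inj_onI) (metis insert_ident mem_Collect_eq subset_eq)
  have "esym x (insert t R) (Suc r) = (\<Sum>U\<in>?A. \<Prod>i\<in>U. x i) + (\<Sum>V\<in>?C. \<Prod>i\<in>insert t V. x i)"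
    unfolding esym_def split
    by (subst sum.union_disjoint) (use assms in \<open>auto simp: sum.reindex[OF inj]\<close>)
  also have "(\<Sum>V\<in>?C. \<Prod>i\<in>insert t V. x i) = x t * esym x R r"
    unfolding esym_def sum_distrib_left
    by (rule sum.cong[OF refl]) (use assms in \<open>auto intro!: prod.insert dest: finite_subset\<close>)
  finally show ?thesis
    by (simp add: esym_def)
qed

text \<open>Expanding \<open>e\<^sub>r \<cdot> \<Sum>x\<close> yields every squarefree monomial of degree \<open>r+1\<close> exactly
  \<open>r+1\<close> times, plus nonnegative monomials with a repeated factor.\<close>
lemma esym_Suc_le:
  assumes "finite R" "\<And>i. i \<in> R \<Longrightarrow> 0 \<le> x i"
  shows "real (Suc r) * esym x R (Suc r) \<le> sum x R * esym x R r"
  using assms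
proof (induction R arbitrary: r rule: finite_induct)
  case empty
  then show ?case by simp
next
  case (insert t R)
  have xt: "0 \<le> x t" and xR: "\<And>i. i \<in> R \<Longrightarrow> 0 \<le> x i"
    using insert.prems by auto
  show ?case
  proof (cases r)
    case 0
    then show ?thesis
      using insert.IH[OF xR, of 0] insert.hyps by (simp add: esym_insert_Suc)
  next
    case (Suc q)
    have IH1: "real (Suc (Suc q)) * esym x R (Suc (Suc q)) \<le> sum x R * esym x R (Suc q)"
      and IH2: "real (Suc q) * esym x R (Suc q) \<le> sum x R * esym x R q"
      using insert.IH[OF xR] by blast+
    have "0 \<le> x t * x t * esym x R q"
      using xt esym_nonneg[of R x q] xR by simp
    then show ?thesis
      using Suc IH1 mult_left_mono[OF IH2 xt] insert.hyps
      by (simp add: esym_insert_Suc algebra_simps)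
  qed
qed

lemma esym_insert_Suc_le:
  assumes "finite R" "t \<notin> R" "\<And>i. i \<in> insert t R \<Longrightarrow> 0 \<le> x i \<and> x i \<le> 1"
  shows "esym x (insert t R) (Suc r) \<le> (1 + sum x R / real (Suc r)) * esym x R r"
proof -
  have e0: "0 \<le> esym x R r"
    using assms(3) by (intro esym_nonneg) auto
  have "esym x R (Suc r) \<le> sum x R / real (Suc r) * esym x R r"
    using esym_Suc_le[OF assms(1), of x r] assms(3) by (simp add: field_simps)
  moreover have "x t * esym x R r \<le> esym x R r"
    using assms(3) e0 by (simp add: mult_left_le_one_le)
  ultimately show ?thesis
    using assms(1,2) by (simp add: esym_insert_Suc algebra_simps)
qed

lemma esym_union_le:
  assumes "finite R" "finite T" "R \<inter> T = {}" "\<And>i. i \<in> R \<union> T \<Longrightarrow> 0 \<le> x i \<and> x i \<le> 1"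
    and "sum x (R \<union> T) \<le> s" "1 + s / real (Suc q) \<le> \<rho>" "q + card T \<le> r"
  shows "esym x (R \<union> T) r \<le> \<rho> ^ card T * esym x R (r - card T)"
  using assms(2-)
proof (induction T arbitrary: r rule: finite_induct)
  case empty
  then show ?case by simp
next
  case (insert t T)
  have tRT: "t \<notin> R \<union> T" and x01: "\<And>i. i \<in> insert t (R \<union> T) \<Longrightarrow> 0 \<le> x i \<and> x i \<le> 1"
    using insert.hyps insert.prems by auto
  have finRT: "finite (R \<union> T)"
    using assms(1) insert.hyps by auto
  obtain r' where r': "r = Suc r'" "q + card T \<le> r'"
    using insert.prems insert.hyps by (cases r) auto
  have "sum x (R \<union> T) \<le> sum x (R \<union> insert t T)"
    by (rule sum_mono2) (use finRT x01 in auto)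
  then have sum_le: "sum x (R \<union> T) \<le> s"
    using insert.prems by simp
  have sum_ge: "0 \<le> sum x (R \<union> T)"
    using x01 by (intro sum_nonneg) auto
  have "sum x (R \<union> T) / real (Suc r') \<le> s / real (Suc q)"
    using sum_le sum_ge r' by (intro frac_le) auto
  then have factor: "1 + sum x (R \<union> T) / real (Suc r') \<le> \<rho>"
    using insert.prems by linarith
  have IH: "esym x (R \<union> T) r' \<le> \<rho> ^ card T * esym x R (r' - card T)"
    using insert.IH insert.prems sum_le r' by auto
  have "esym x (R \<union> insert t T) r = esym x (insert t (R \<union> T)) (Suc r')"
    using r' by simp
  also have "\<dots> \<le> (1 + sum x (R \<union> T) / real (Suc r')) * esym x (R \<union> T) r'"
    by (rule esym_insert_Suc_le[OF finRT tRT x01])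
  also have "\<dots> \<le> \<rho> * (\<rho> ^ card T * esym x R (r' - card T))"
    using factor IH sum_ge esym_nonneg[of "R \<union> T" x r'] x01
    by (intro mult_mono) (auto intro: order_trans[rotated])
  also have "\<dots> = \<rho> ^ card (insert t T) * esym x R (r - card (insert t T))"
    using insert.hyps r' by simp
  finally show ?case .
qed

lemma sum_supersets_prod:
  assumes "finite N" "T \<subseteq> N" "card T \<le> k"
  shows "(\<Sum>S | S \<subseteq> N \<and> card S = k \<and> T \<subseteq> S. \<Prod>i\<in>S. x i) =
    esym x (N - T) (k - card T) * (\<Prod>i\<in>T. x i)"
proof -
  let ?U = "{U. U \<subseteq> N - T \<and> card U = k - card T}"
  have finT: "finite T"
    using assms(1,2) by (rule finite_subset[rotated])
  have "{S. S \<subseteq> N \<and> card S = k \<and> T \<subseteq> S} = (\<lambda>U. U \<union> T) ` ?U"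
  proof (intro equalityI subsetI)
    fix S
    assume S: "S \<in> {S. S \<subseteq> N \<and> card S = k \<and> T \<subseteq> S}"
    then have "S - T \<in> ?U" "S = (S - T) \<union> T"
      using finT by (auto simp: card_Diff_subset)
    then show "S \<in> (\<lambda>U. U \<union> T) ` ?U"
      by blast
  next
    fix S
    assume "S \<in> (\<lambda>U. U \<union> T) ` ?U"
    then obtain U where U: "U \<subseteq> N - T" "card U = k - card T" "S = U \<union> T"
      by auto
    moreover have "finite U"
      using U(1) assms(1) by (auto dest: finite_subset)
    ultimately have "card S = k"
      using finT assms(3) by (subst U(3), subst card_Un_disjoint) auto
    then show "S \<in> {S. S \<subseteq> N \<and> card S = k \<and> T \<subseteq> S}"
      using U assms(2) by auto
  qed
  moreover have "inj_on (\<lambda>U. U \<union> T) ?U"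
    by (intro inj_onI) blast
  moreover have "(\<Prod>i\<in>U \<union> T. x i) = (\<Prod>i\<in>U. x i) * (\<Prod>i\<in>T. x i)" if "U \<in> ?U" for U
    using that finT assms(1) by (intro prod.union_disjoint) (auto dest: finite_subset)
  ultimately show ?thesis
    by (simp add: sum.reindex esym_def sum_distrib_right)
qed

lemma esym_pos:
  assumes "finite N" "\<And>i. i \<in> N \<Longrightarrow> 0 \<le> x i \<and> x i \<le> 1" "sum x N = real k"
  shows "0 < esym x N k"
proof -
  define P where "P = {i \<in> N. 0 < x i}"
  have "real k = sum x P"
    unfolding assms(3)[symmetric] P_def
    by (rule sum.mono_neutral_right) (use assms in \<open>force+\<close>)
  also have "\<dots> \<le> real (card P)"
    using assms(2) sum_mono[of P x "\<lambda>_. 1"] by (simp add: P_def)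
  finally obtain U where U: "U \<subseteq> P" "card U = k"
    by (meson obtain_subset_with_card_n of_nat_le_iff)
  then have "0 < (\<Prod>i\<in>U. x i)"
    by (intro prod_pos) (auto simp: P_def)
  also have "\<dots> \<le> esym x N k"
    unfolding esym_def
    by (rule member_le_sum) (use U assms in \<open>auto simp: P_def intro!: prod_nonneg\<close>)
  finally show ?thesis .
qed

lemma wdet_ones_eq_det_square:
  fixes a :: "nat \<Rightarrow> real ^ 'm::finite"
  assumes "finite T" "card T = CARD('m)"
  shows "\<exists>B :: real ^ 'm ^ 'm. wdet (\<lambda>_. 1) a T = (det B)\<^sup>2"
proof -
  obtain h where h: "bij_betw h (UNIV :: 'm set) T"
    using finite_same_card_bij[of "UNIV :: 'm set" T] assms by auto
  define B :: "real ^ 'm ^ 'm" where "B = (\<chi> r c. a (h c) $ r)"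
  have "(\<Sum>i\<in>T. a i $ r * a i $ s) = (\<Sum>c\<in>UNIV. a (h c) $ r * a (h c) $ s)" for r s
    using sum.reindex_bij_betw[OF h, of "\<lambda>i. a i $ r * a i $ s"] by simp
  then have "(\<Sum>i\<in>T. 1 *\<^sub>R outer (a i)) = B ** transpose B"
    by (simp add: vec_eq_iff outer_def matrix_matrix_mult_def B_def transpose_def)
  then have "wdet (\<lambda>_. 1) a T = (det B)\<^sup>2"
    by (simp add: wdet_def det_mul det_transpose power2_eq_square)
  then show ?thesis ..
qed

lemma wdet_nonneg:
  fixes a :: "nat \<Rightarrow> real ^ 'm::finite"
  assumes "finite S" "\<And>i. i \<in> S \<Longrightarrow> 0 \<le> y i"
  shows "0 \<le> wdet y a S"
  unfolding wdet_Cauchy_Binet[OF assms(1)]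
proof (intro sum_nonneg mult_nonneg_nonneg prod_nonneg)
  fix T
  assume "T \<in> {T. T \<subseteq> S \<and> card T = CARD('m)}"
  moreover from this have "finite T"
    using assms(1) by (auto dest: finite_subset)
  ultimately show "0 \<le> wdet (\<lambda>_. 1) a T"
    using wdet_ones_eq_det_square[of T a] by auto
qed (use assms(2) in auto)

lemma sum_ksubsets_prod_wdet:
  fixes a :: "nat \<Rightarrow> real ^ 'm::finite"
  assumes "finite N" "CARD('m) \<le> k"
  shows "(\<Sum>S | S \<subseteq> N \<and> card S = k. (\<Prod>i\<in>S. x i) * wdet (\<lambda>_. 1) a S) =
    (\<Sum>T | T \<subseteq> N \<and> card T = CARD('m).
       esym x (N - T) (k - CARD('m)) * (\<Prod>i\<in>T. x i) * wdet (\<lambda>_. 1) a T)"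
proof -
  let ?K = "{S. S \<subseteq> N \<and> card S = k}" and ?M = "{T. T \<subseteq> N \<and> card T = CARD('m)}"
  have "(\<Prod>i\<in>S. x i) * wdet (\<lambda>_. 1) a S =
      (\<Sum>T | T \<in> ?M \<and> T \<subseteq> S. (\<Prod>i\<in>S. x i) * wdet (\<lambda>_. 1) a T)" if "S \<in> ?K" for S
  proof -
    have "finite S" "{T. T \<in> ?M \<and> T \<subseteq> S} = {T. T \<subseteq> S \<and> card T = CARD('m)}"
      using that assms(1) by (auto dest: finite_subset)
    then show ?thesis
      by (simp add: wdet_Cauchy_Binet[of S "\<lambda>_. 1"] sum_distrib_left)
  qed
  then have "(\<Sum>S\<in>?K. (\<Prod>i\<in>S. x i) * wdet (\<lambda>_. 1) a S) =
      (\<Sum>S\<in>?K. \<Sum>T | T \<in> ?M \<and> T \<subseteq> S. (\<Prod>i\<in>S. x i) * wdet (\<lambda>_. 1) a T)"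
    by (rule sum.cong[OF refl])
  also have "\<dots> = (\<Sum>T\<in>?M. \<Sum>S | S \<in> ?K \<and> T \<subseteq> S. (\<Prod>i\<in>S. x i) * wdet (\<lambda>_. 1) a T)"
    by (rule sum.swap_restrict) (use assms(1) in auto)
  also have "\<dots> = (\<Sum>T\<in>?M. esym x (N - T) (k - CARD('m)) * (\<Prod>i\<in>T. x i) * wdet (\<lambda>_. 1) a T)"
    by (rule sum.cong[OF refl])
      (use assms in \<open>auto simp: sum_distrib_right[symmetric] sum_supersets_prod conj_assoc\<close>)
  finally show ?thesis .
qed

lemma esym_le_esym_complement:
  assumes "finite N" "T \<subseteq> N" "card T \<le> k" "\<And>i. i \<in> N \<Longrightarrow> 0 \<le> x i \<and> x i \<le> 1"
    and "sum x N = real k" "0 \<le> c" "c * (1 + real k / real (k - card T + 1)) \<le> 1"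
  shows "c ^ card T * esym x N k \<le> esym x (N - T) (k - card T)"
proof -
  define \<rho> where "\<rho> = 1 + real k / real (k - card T + 1)"
  have union: "N - T \<union> T = N"
    using assms(2) by auto
  have "esym x N k \<le> \<rho> ^ card T * esym x (N - T) (k - card T)"
    using esym_union_le[of "N - T" T x "real k" "k - card T" \<rho> k, unfolded union]
      assms(1-5) finite_subset[OF assms(2,1)]
    by (auto simp: \<rho>_def)
  then have "c ^ card T * esym x N k \<le> (c * \<rho>) ^ card T * esym x (N - T) (k - card T)"
    using assms(6) by (simp add: power_mult_distrib mult_left_mono mult.assoc)
  also have "\<dots> \<le> esym x (N - T) (k - card T)"
    using assms(4,6,7) esym_nonneg[of "N - T" x]
    by (intro mult_left_le_one_le power_le_one) (auto simp: \<rho>_def)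
  finally show ?thesis .
qed

lemma expected_wdet_ge:
  fixes a :: "nat \<Rightarrow> real ^ 'm::finite"
  assumes "CARD('m) \<le> k" "sum x {1..n} = real k" "\<forall>i\<in>{1..n}. 0 \<le> x i \<and> x i \<le> 1"
    and "0 \<le> c" "c * (1 + real k / real (k - CARD('m) + 1)) \<le> 1"
  shows "c ^ CARD('m) * wdet x a {1..n} \<le>
    (\<Sum>S\<in>ksubsets n k. sample_prob n k x S * wdet (\<lambda>_. 1) a S)"
proof -
  let ?N = "{1..n}" and ?m = "CARD('m)"
  define E where "E = esym x ?N k"
  have "0 < E"
    unfolding E_def using assms(2,3) by (intro esym_pos) auto
  have "E * (c ^ ?m * wdet x a ?N) =
      (\<Sum>T | T \<subseteq> ?N \<and> card T = ?m. c ^ ?m * E * (\<Prod>i\<in>T. x i) * wdet (\<lambda>_. 1) a T)"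
    unfolding wdet_Cauchy_Binet[OF finite_atLeastAtMost, of x] by (simp add: sum_distrib_left ac_simps)
  also have "\<dots> \<le> (\<Sum>T | T \<subseteq> ?N \<and> card T = ?m.
      esym x (?N - T) (k - ?m) * (\<Prod>i\<in>T. x i) * wdet (\<lambda>_. 1) a T)"
  proof (rule sum_mono)
    fix T
    assume T: "T \<in> {T. T \<subseteq> ?N \<and> card T = ?m}"
    then have "T \<subseteq> ?N" "card T = ?m"
      by auto
    then have "c ^ ?m * E \<le> esym x (?N - T) (k - ?m)"
      unfolding E_def using esym_le_esym_complement[of ?N T k x c] assms by auto
    moreover have "0 \<le> (\<Prod>i\<in>T. x i) * wdet (\<lambda>_. 1) a T"
      using T assms(3) by (intro mult_nonneg_nonneg prod_nonneg wdet_nonneg) (auto dest: finite_subset)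
    ultimately show "c ^ ?m * E * (\<Prod>i\<in>T. x i) * wdet (\<lambda>_. 1) a T \<le>
        esym x (?N - T) (k - ?m) * (\<Prod>i\<in>T. x i) * wdet (\<lambda>_. 1) a T"
      by (metis mult.assoc mult_right_mono)
  qed
  also have "\<dots> = (\<Sum>S | S \<subseteq> ?N \<and> card S = k. (\<Prod>i\<in>S. x i) * wdet (\<lambda>_. 1) a S)"
    by (rule sum_ksubsets_prod_wdet[symmetric]) (use assms(1) in auto)
  also have "\<dots> = E * (\<Sum>S\<in>ksubsets n k. sample_prob n k x S * wdet (\<lambda>_. 1) a S)"
    using \<open>0 < E\<close>
    by (simp add: E_def esym_def sample_prob_def ksubsets_def sum_distrib_left)
  finally show ?thesis
    using \<open>0 < E\<close> by simp
qed

lemma relax_optimal_ge_ksubset: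
  fixes a :: "nat \<Rightarrow> real ^ 'm::finite"
  assumes "relax_optimal n k a x w" "S \<in> ksubsets n k"
  shows "wdet (\<lambda>_. 1) a S powr (1 / real CARD('m)) \<le> w"
proof -
  let ?x = "\<lambda>i. if i \<in> S then 1 else 0 :: real"
  have S: "S \<subseteq> {1..n}" "card S = k"
    using assms(2) by (auto simp: ksubsets_def)
  have restrict: "(\<Sum>i\<in>{1..n}. if i \<in> S then f i else 0) = sum f S" for f :: "nat \<Rightarrow> real ^ 'm ^ 'm"
    using sum.inter_restrict[of "{1..n}" f S] S by (simp add: Int_absorb1)
  have "(\<Sum>i\<in>{1..n}. ?x i *\<^sub>R outer (a i)) = (\<Sum>i\<in>S. 1 *\<^sub>R outer (a i))"
    unfolding restrict[symmetric] by (rule sum.cong) auto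
  moreover have "(\<Sum>i\<in>{1..n}. ?x i) = real k"
    using sum.inter_restrict[of "{1..n}" "\<lambda>_. 1 :: real" S] S by (simp add: Int_absorb1)
  ultimately have "wdet ?x a {1..n} = wdet (\<lambda>_. 1) a S" "(\<Sum>i\<in>{1..n}. ?x i) = real k"
    by (simp_all add: wdet_def)
  then have "relax_feasible n k a ?x (wdet (\<lambda>_. 1) a S powr (1 / real CARD('m)))"
    by (simp add: relax_feasible_def)
  then show ?thesis
    using assms(1) by (auto simp: relax_optimal_def)
qed

lemma approximation_factor_le_one:
  fixes \<epsilon> k m :: real
  assumes "0 < \<epsilon>" "\<epsilon> < 1/2" "1 \<le> m" "m \<le> k" "(m - 1) / (2 * \<epsilon>) \<le> k"
  shows "(1/2 - \<epsilon>) * (1 + k / (k - m + 1)) \<le> 1"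
proof -
  have "m - 1 \<le> 2 * \<epsilon> * k"
    using assms(1,5) by (simp add: field_simps)
  moreover have "\<epsilon> * (m - 1) \<le> (1/2) * (m - 1)"
    using assms(2,3) by (intro mult_right_mono) auto
  ultimately have "(1/2 - \<epsilon>) * (2 * k - m + 1) \<le> k - m + 1"
    by (simp add: algebra_simps)
  moreover have "1 + k / (k - m + 1) = (2 * k - m + 1) / (k - m + 1)"
    using assms(4) by (simp add: field_simps)
  ultimately show ?thesis
    using assms(4) by (simp add: field_simps)
qed

lemma expected_wdet_root_ge_best:
  fixes a :: "nat \<Rightarrow> real ^ 'm::finite"
  assumes "relax_optimal n k a x w" "CARD('m) \<le> k" "k \<le> n"
    and "0 \<le> c" "c * (1 + real k / real (k - CARD('m) + 1)) \<le> 1"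
  shows "c * Max ((\<lambda>S. wdet (\<lambda>_. 1) a S powr (1 / real CARD('m))) ` ksubsets n k)
    \<le> (\<Sum>S\<in>ksubsets n k. sample_prob n k x S * wdet (\<lambda>_. 1) a S) powr (1 / real CARD('m))"
proof -
  let ?m = "CARD('m)" and ?N = "{1..n}"
  let ?Q = "\<Sum>S\<in>ksubsets n k. sample_prob n k x S * wdet (\<lambda>_. 1) a S"
  have feas: "w \<le> wdet x a ?N powr (1 / real ?m)" "sum x ?N = real k" "\<forall>i\<in>?N. 0 \<le> x i \<and> x i \<le> 1"
    using assms(1) by (auto simp: relax_optimal_def relax_feasible_def)
  have "ksubsets n k \<noteq> {}"
    using assms(3) by (auto simp: ksubsets_def intro!: exI[of _ "{1..k}"])
  then have best_le: "Max ((\<lambda>S. wdet (\<lambda>_. 1) a S powr (1 / real ?m)) ` ksubsets n k)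
      \<le> wdet x a ?N powr (1 / real ?m)"
    using relax_optimal_ge_ksubset[OF assms(1)] feas(1)
    by (auto simp: Max_le_iff ksubsets_def intro: order_trans)
  have D: "0 \<le> wdet x a ?N"
    using feas(3) by (intro wdet_nonneg) auto
  have root: "(c ^ ?m) powr (1 / real ?m) = c"
    using assms(4) by (cases "c = 0") (simp_all add: powr_realpow[symmetric] powr_powr)
  have "c * Max ((\<lambda>S. wdet (\<lambda>_. 1) a S powr (1 / real ?m)) ` ksubsets n k)
      \<le> c * wdet x a ?N powr (1 / real ?m)"
    using best_le assms(4) by (rule mult_left_mono)
  also have "\<dots> = (c ^ ?m * wdet x a ?N) powr (1 / real ?m)"
    using assms(4) D by (simp add: powr_mult root)
  also have "\<dots> \<le> ?Q powr (1 / real ?m)"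
    using assms(2,4,5) feas(2,3) D by (intro powr_mono2 expected_wdet_ge) auto
  finally show ?thesis .
qed

theorem corollary1:
  fixes a :: "nat \<Rightarrow> real ^ 'm" and n k :: nat and \<epsilon> :: real
    and xh :: "nat \<Rightarrow> real" and wh :: real
  assumes "0 < \<epsilon>" "\<epsilon> < 1"
    and "CARD('m) \<le> k" "k \<le> n"
    and "real k \<ge> (real CARD('m) - 1) / (2 * \<epsilon>)"
    and "relax_optimal n k a xh wh"
  shows "(\<Sum>S\<in>ksubsets n k. sample_prob n k xh S * wdet (\<lambda>_. 1) a S) powr (1 / real CARD('m))
         \<ge> (0.5 - \<epsilon>) * Max ((\<lambda>S. wdet (\<lambda>_. 1) a S powr (1 / real CARD('m))) ` ksubsets n k)"
proof (cases "\<epsilon> < 1/2")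
  case True
  have "(1/2 - \<epsilon>) * (1 + real k / real (k - CARD('m) + 1)) \<le> 1"
    using approximation_factor_le_one[OF assms(1) True, of "real CARD('m)" "real k"] assms(3,5)
    by (simp add: of_nat_diff ac_simps)
  then show ?thesis
    using expected_wdet_root_ge_best[OF assms(6,3,4)] True by simp
next
  case False
  have "ksubsets n k \<noteq> {}"
    using assms(4) by (auto simp: ksubsets_def intro!: exI[of _ "{1..k}"])
  then have "0 \<le> Max ((\<lambda>S. wdet (\<lambda>_. 1) a S powr (1 / real CARD('m))) ` ksubsets n k)"
    by (auto simp: Max_ge_iff ksubsets_def)
  then have "(0.5 - \<epsilon>) * Max ((\<lambda>S. wdet (\<lambda>_. 1) a S powr (1 / real CARD('m))) ` ksubsets n k) \<le> 0"
    using False by (simp add: mult_nonpos_nonneg)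
  then show ?thesis
    by (meson order_trans powr_ge_zero)
qed

end
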